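(* Let $N\ge3$, let $A,B$ be real constants, let $a(t)$ be a nonvanishing $C^1$ function on a time interval, and let $f\ge0$ be a $C^1$ function on $\mathbb{R}$. Then \[ \rho(t,\vec x)=\frac{1}{a^2(t)}f\Big(\frac{Ax_1+Bx_2}{a(t)}\Big),\qquad \vec u(t,\vec x)=\frac{\dot a(t)}{a(t)}\big(x_1,\,x_2,\,x_1,\,\dots,\,x_1\big) \] (with $u_i=\frac{\dot a}{a}x_1$ for $3\le i\le N$) satisfy the continuity equation $\rho_t+\nabla\cdot(\rho\vec u)=0$ in $\mathbb{R}^N$. *)

theory Defs
  imports "HOL-Analysis.Analysis"
begin

text \<open>Points of R^N are represented as functions x :: nat \<Rightarrow> real, the coordinates
  being x 1, ..., x N (values at other indices are irrelevant).\<close>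

definition has_partial_deriv ::
  "((nat \<Rightarrow> real) \<Rightarrow> real) \<Rightarrow> nat \<Rightarrow> (nat \<Rightarrow> real) \<Rightarrow> real \<Rightarrow> bool" where
  "has_partial_deriv g i x D \<longleftrightarrow> ((\<lambda>s. g (x(i := s))) has_real_derivative D) (at (x i))"

definition dens :: "(real \<Rightarrow> real) \<Rightarrow> (real \<Rightarrow> real) \<Rightarrow> real \<Rightarrow> real \<Rightarrow> real \<Rightarrow> (nat \<Rightarrow> real) \<Rightarrow> real" where
  "dens f a A B t x = f ((A * x 1 + B * x 2) / a t) / (a t)^2"

definition vel :: "(real \<Rightarrow> real) \<Rightarrow> (real \<Rightarrow> real) \<Rightarrow> nat \<Rightarrow> real \<Rightarrow> (nat \<Rightarrow> real) \<Rightarrow> real" where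
  "vel a a' i t x = a' t / a t * (if i = 2 then x 2 else x 1)"

end

theory Submission
  imports Defs
begin

(*
  Along the line through x in direction i, the product rho u_i is independent of x_i for i >= 3
  and equals rho times (a'/a) x_i for i = 1, 2; hence div(rho u) = (a'/a)(2 rho + x_1 d_1 rho + x_2 d_2 rho).
  As rho = f(c/a)/a^2 with c = A x_1 + B x_2 homogeneous of degree one in (x_1, x_2), Euler's identity
  gives x_1 d_1 rho + x_2 d_2 rho = c f'(c/a)/a^3, while rho_t = -(a'/a)(2 rho + c f'(c/a)/a^3).
*)

lemma has_partial_deriv_coord:
  "has_partial_deriv (\<lambda>y. y j) i x (if j = i then 1 else 0)"
  unfolding has_partial_deriv_def by (cases "j = i") auto

lemma has_partial_deriv_const:
  "has_partial_deriv (\<lambda>y. c) i x 0"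
  unfolding has_partial_deriv_def by simp

lemma has_partial_deriv_add:
  assumes "has_partial_deriv g i x D" "has_partial_deriv h i x E"
  shows "has_partial_deriv (\<lambda>y. g y + h y) i x (D + E)"
  using assms unfolding has_partial_deriv_def by (rule DERIV_add)

lemma has_partial_deriv_mult:
  assumes "has_partial_deriv g i x D" "has_partial_deriv h i x E"
  shows "has_partial_deriv (\<lambda>y. g y * h y) i x (D * h x + g x * E)"
  using DERIV_mult[OF assms[unfolded has_partial_deriv_def]]
  unfolding has_partial_deriv_def by (simp add: mult.commute)

lemma has_partial_deriv_scaled_coord:
  "has_partial_deriv (\<lambda>y. C * y j) i x (if j = i then C else 0)"
  using has_partial_deriv_mult[OF has_partial_deriv_const has_partial_deriv_coord, of C j i x]
  by (cases "j = i") simp_all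

lemma has_partial_deriv_chain:
  assumes "(f has_real_derivative f') (at (g x))" "has_partial_deriv g i x D"
  shows "has_partial_deriv (\<lambda>y. f (g y)) i x (f' * D)"
  using DERIV_chain2[of f f' "\<lambda>s. g (x(i := s))" "x i" D] assms
  unfolding has_partial_deriv_def by simp

lemma dens_has_partial_deriv:
  assumes "\<forall>y. (f has_real_derivative f' y) (at y)"
  shows "has_partial_deriv (dens f a A B t) i x
    (f' ((A * x 1 + B * x 2) / a t) * ((if i = 1 then A else 0) + (if i = 2 then B else 0)) / (a t)^3)"
proof -
  have lin: "has_partial_deriv (\<lambda>y. (A * y 1 + B * y 2) / a t) i x
      (((if i = 1 then A else 0) + (if i = 2 then B else 0)) / a t)"
    using has_partial_deriv_mult[OF has_partial_deriv_add[OF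
          has_partial_deriv_scaled_coord[of A 1 i x] has_partial_deriv_scaled_coord[of B 2 i x]]
        has_partial_deriv_const[of "1 / a t" i x]]
    by (auto simp: divide_inverse)
  have "dens f a A B t = (\<lambda>y. f ((A * y 1 + B * y 2) / a t) * (1 / (a t)^2))"
    by (simp add: dens_def fun_eq_iff)
  then show ?thesis
    using has_partial_deriv_mult[OF has_partial_deriv_chain[OF assms[rule_format] lin]
        has_partial_deriv_const, of "1 / (a t)^2"]
    by (simp add: power3_eq_cube power2_eq_square mult.assoc)
qed

lemma vel_has_partial_deriv:
  "has_partial_deriv (vel a a' i t) i x (if i \<in> {1, 2} then a' t / a t else 0)"
proof -
  have "vel a a' i t = (\<lambda>y. a' t / a t * y (if i = 2 then 2 else 1))"
    by (auto simp: vel_def)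
  then show ?thesis
    using has_partial_deriv_scaled_coord[of "a' t / a t" "if i = 2 then 2 else 1" i x] by auto
qed

lemma dens_has_time_deriv:
  assumes "a t \<noteq> 0" "(a has_real_derivative a') (at t)"
    and "\<forall>y. (f has_real_derivative f' y) (at y)"
  shows "((\<lambda>s. dens f a A B s x) has_real_derivative
    - (a' / a t) * (2 * dens f a A B t x
        + (A * x 1 + B * x 2) * f' ((A * x 1 + B * x 2) / a t) / (a t)^3)) (at t)"
proof -
  define c where "c = A * x 1 + B * x 2"
  have arg: "((\<lambda>s. c / a s) has_real_derivative - c * a' / (a t)^2) (at t)"
    using DERIV_divide[OF DERIV_const assms(2), of c] assms(1) by (simp add: power2_eq_square)
  have sq: "((\<lambda>s. (a s)^2) has_real_derivative 2 * a t * a') (at t)"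
    using DERIV_power[OF assms(2), of 2] by (simp add: mult_ac)
  have "((\<lambda>s. f (c / a s) / (a s)^2) has_real_derivative
      (f' (c / a t) * (- c * a' / (a t)^2) * (a t)^2 - f (c / a t) * (2 * a t * a'))
        / ((a t)^2 * (a t)^2)) (at t)"
    using DERIV_divide[OF DERIV_chain2[OF assms(3)[rule_format] arg] sq] assms(1) by simp
  moreover have "(f' (c / a t) * (- c * a' / (a t)^2) * (a t)^2 - f (c / a t) * (2 * a t * a'))
        / ((a t)^2 * (a t)^2)
      = - (a' / a t) * (2 * (f (c / a t) / (a t)^2) + c * f' (c / a t) / (a t)^3)"
    using assms(1) by (simp add: field_simps power3_eq_cube power2_eq_square)
  ultimately show ?thesis
    by (simp add: dens_def c_def)
qed

theorem lemma7:
  fixes N :: nat and A B :: real and a a' f f' :: "real \<Rightarrow> real" and I :: "real set"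
  assumes N: "N \<ge> 3"
    and I: "is_interval I" "open I"
    and a_nz: "\<forall>t\<in>I. a t \<noteq> 0"
    and a_deriv: "\<forall>t\<in>I. (a has_real_derivative a' t) (at t)"
    and a'_cont: "continuous_on I a'"
    and f_nonneg: "\<forall>y. f y \<ge> 0"
    and f_deriv: "\<forall>y. (f has_real_derivative f' y) (at y)"
    and f'_cont: "continuous_on UNIV f'"
  shows "\<forall>t\<in>I. \<forall>x :: nat \<Rightarrow> real. \<exists>Dt Dx.
           ((\<lambda>s. dens f a A B s x) has_real_derivative Dt) (at t)
         \<and> (\<forall>i\<in>{1..N}. has_partial_deriv (\<lambda>y. dens f a A B t y * vel a a' i t y) i x (Dx i))
         \<and> Dt + (\<Sum>i=1..N. Dx i) = 0"
proof (intro ballI allI exI conjI)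
  fix t and x :: "nat \<Rightarrow> real" assume t: "t \<in> I"
  define c where "c = A * x 1 + B * x 2"
  define \<rho>' where "\<rho>' i = f' (c / a t) * ((if i = 1 then A else 0) + (if i = 2 then B else 0)) / (a t)^3"
    for i :: nat
  define h' where "h' i = (if i \<in> {1, 2} then a' t / a t else 0)" for i :: nat
  define Dx where "Dx i = \<rho>' i * vel a a' i t x + dens f a A B t x * h' i" for i
  show "((\<lambda>s. dens f a A B s x) has_real_derivative
      - (a' t / a t) * (2 * dens f a A B t x + c * f' (c / a t) / (a t)^3)) (at t)"
    unfolding c_def using dens_has_time_deriv a_nz a_deriv f_deriv t by blast
  show "has_partial_deriv (\<lambda>y. dens f a A B t y * vel a a' i t y) i x (Dx i)" for i
    using has_partial_deriv_mult[OF dens_has_partial_deriv[OF f_deriv] vel_has_partial_deriv]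
    by (simp add: Dx_def \<rho>'_def h'_def c_def)
  have "(\<Sum>i=1..N. Dx i) = (\<Sum>i\<in>{1, 2}. Dx i)"
    by (rule sum.mono_neutral_right) (use N in \<open>auto simp: Dx_def \<rho>'_def h'_def\<close>)
  also have "\<dots> = (a' t / a t) * (2 * dens f a A B t x + c * f' (c / a t) / (a t)^3)"
    using a_nz t by (simp add: Dx_def \<rho>'_def h'_def vel_def c_def field_simps)
  finally show "- (a' t / a t) * (2 * dens f a A B t x + c * f' (c / a t) / (a t)^3)
      + (\<Sum>i=1..N. Dx i) = 0"
    by simp
qed

end
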